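(* Let $b_n=\max\{\alpha_1(\lambda)\colon \lambda\in P(n)\}$, where $\alpha_1(\lambda)$ is the number of distinct parts of $\lambda$. Then, as formal power series in $q$, \[ \sum_{n\geq 0} b_n q^n=\frac{1}{1-q}\left(\frac{(q^2;q^2)^2_{\infty}}{(q;q)_{\infty}}-1\right). \]
   Context: $P(n)$ is the set of partitions of $n$ (with $P(0)$ containing only the empty partition). Equivalently, $\alpha_1(\lambda)$ is the number of cells of the Young diagram of $\lambda$ with hook length $1$. The notation $(a;q)_\infty=\prod_{i\geq 0}(1-aq^i)$, so $(q;q)_\infty=(1-q)(1-q^2)(1-q^3)\cdots$ and $(q^2;q^2)_\infty=(1-q^2)(1-q^4)(1-q^6)\cdots$. *)

theory Defs
  imports "HOL-Library.Multiset" "HOL-Computational_Algebra.Formal_Power_Series"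
begin

definition partitions :: "nat \<Rightarrow> nat multiset set" where
  "partitions n = {M. (\<forall>x\<in>#M. 0 < x) \<and> sum_mset M = n}"

definition alpha1 :: "nat multiset \<Rightarrow> nat" where
  "alpha1 M = card (set_mset M)"

definition b_seq :: "nat \<Rightarrow> nat" where
  "b_seq n = Max (alpha1 ` partitions n)"

text \<open>The infinite q-Pochhammer symbol (q^m;q^m)_infinity = prod_{i>=1} (1 - q^(m i)), m >= 1,
  as a formal power series: its n-th coefficient is that of the finite product over
  i = 1..n (the remaining factors are congruent to 1 modulo q^(n+1)).\<close>
definition qpoch_inf :: "nat \<Rightarrow> 'a::comm_ring_1 fps" where
  "qpoch_inf m = Abs_fps (\<lambda>n. fps_nth (\<Prod>i\<in>{1..n}. (1 - fps_X ^ (m * i))) n)"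

end

(* k distinct positive parts sum to at least T_k = 1 + ... + k, and the parts
   1, ..., k - 1, n - T_(k-1) attain k distinct values whenever T_k <= n.  Hence b_n is the
   largest k with T_k <= n, and (1 - q) sum_n b_n q^n = sum_(k>=0) q^(T_k) - 1.  That this
   theta series equals (q^2;q^2)^2/(q;q) is Gauss's identity, derived here from the finite
   triple product  sum_j [2n+1 choose j]_q q^(T_(j-n-1)) = 2 (-q;q)_n^2 : after multiplying
   by (q;q)_infinity, every Gaussian binomial becomes 1 modulo q^(n+1). *)

theory Submission
  imports Defs
begin

unbundle fps_syntax

section \<open>Agreement of power series below a degree\<close>

definition fps_agree :: "nat \<Rightarrow> 'a fps \<Rightarrow> 'a fps \<Rightarrow> bool" where
  "fps_agree n f g \<longleftrightarrow> (\<forall>i<n. f $ i = g $ i)"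

lemma fps_agree_refl [simp]: "fps_agree n f f"
  by (simp add: fps_agree_def)

lemma fps_agree_sym: "fps_agree n f g \<Longrightarrow> fps_agree n g f"
  by (simp add: fps_agree_def)

lemma fps_agree_trans [trans]: "fps_agree n f g \<Longrightarrow> fps_agree n g h \<Longrightarrow> fps_agree n f h"
  by (simp add: fps_agree_def)

lemma fps_agree_mono: "fps_agree n f g \<Longrightarrow> m \<le> n \<Longrightarrow> fps_agree m f g"
  by (simp add: fps_agree_def)

lemma fps_agree_mult:
  fixes f g :: "'a::comm_semiring_1 fps"
  shows "fps_agree n f g \<Longrightarrow> fps_agree n f' g' \<Longrightarrow> fps_agree n (f * f') (g * g')"
  unfolding fps_agree_def fps_mult_nth by (auto intro!: sum.cong)

lemma fps_agree_sum:
  "(\<And>x. x \<in> A \<Longrightarrow> fps_agree n (f x) (g x)) \<Longrightarrow> fps_agree n (sum f A) (sum g A)"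
  by (simp add: fps_agree_def fps_sum_nth)

lemma fps_agree_mult_X_power:
  fixes f g :: "'a::comm_semiring_1 fps"
  shows "fps_agree n f g \<Longrightarrow> fps_agree (n + k) (f * fps_X ^ k) (g * fps_X ^ k)"
  by (simp add: fps_agree_def fps_X_power_mult_right_nth)

lemma fps_eq_if_agree: "(\<And>n. fps_agree n f g) \<Longrightarrow> f = g"
  by (rule fps_ext) (auto simp: fps_agree_def)

lemma fps_agree_mult_cancel:
  fixes f g P :: "'a::field fps"
  assumes "fps_agree n (P * f) (P * g)" "P $ 0 \<noteq> 0"
  shows "fps_agree n f g"
proof -
  have "fps_agree n (inverse P * (P * f)) (inverse P * (P * g))"
    by (rule fps_agree_mult[OF fps_agree_refl assms(1)])
  thus ?thesis using assms(2) by (simp add: mult.assoc[symmetric] inverse_mult_eq_1)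
qed

lemma fps_agree_one_minus_X_power:
  "n \<le> k \<Longrightarrow> fps_agree n (1 - fps_X ^ k :: 'a::comm_ring_1 fps) 1"
  by (simp add: fps_agree_def)

section \<open>\<open>q\<close>-products and Gaussian binomials\<close>

definition qprod :: "nat \<Rightarrow> nat \<Rightarrow> 'a::comm_ring_1 fps" where
  "qprod m k = (\<Prod>i\<in>{1..k}. 1 - fps_X ^ (m * i))"

lemma qprod_0 [simp]: "qprod m 0 = 1"
  by (simp add: qprod_def)

lemma qprod_Suc: "qprod m (Suc k) = qprod m k * (1 - fps_X ^ (m * Suc k))"
  by (simp add: qprod_def prod.nat_ivl_Suc' mult.commute)

lemma qprod_nth_0: "m \<ge> 1 \<Longrightarrow> qprod m k $ 0 = 1"
  by (induction k) (simp_all add: qprod_Suc)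

lemma qprod_agree_qprod:
  assumes "m \<ge> 1" "k \<le> l"
  shows "fps_agree (k + 1) (qprod m l) (qprod m k)"
  using assms(2)
proof (induction l rule: dec_induct)
  case (step l)
  have "k + 1 \<le> m * Suc l"
    using step(1) assms(1) mult_le_mono1[of 1 m "Suc l"] by simp
  hence "fps_agree (k + 1) (1 - fps_X ^ (m * Suc l) :: 'a fps) 1"
    by (rule fps_agree_one_minus_X_power)
  from fps_agree_mult[OF step(3) this] show ?case
    by (simp add: qprod_Suc)
qed simp

lemma qpoch_inf_agree_qprod:
  assumes "m \<ge> 1"
  shows "fps_agree (k + 1) (qpoch_inf m) (qprod m k)"
  unfolding fps_agree_def
proof (intro allI impI)
  fix i assume "i < k + 1"
  hence "fps_agree (i + 1) (qprod m k) (qprod m i :: 'a fps)"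
    by (intro qprod_agree_qprod assms) simp
  thus "qpoch_inf m $ i = (qprod m k :: 'a fps) $ i"
    by (simp add: fps_agree_def qpoch_inf_def qprod_def)
qed

lemma qpoch_inf_nth_0: "qpoch_inf m $ 0 = 1"
  by (simp add: qpoch_inf_def)

definition qpoch_plus :: "nat \<Rightarrow> nat \<Rightarrow> 'a::comm_ring_1 fps" where
  "qpoch_plus a n = (\<Prod>i<n. 1 + fps_X ^ (a + i))"

lemma qpoch_plus_0_Suc: "qpoch_plus 0 (Suc n) = 2 * qpoch_plus 1 n"
  unfolding qpoch_plus_def prod.lessThan_Suc_shift by simp

lemma qprod_1_mult_qpoch_plus_1: "qprod 1 n * qpoch_plus 1 n = qprod 2 n"
proof (induction n)
  case (Suc n)
  have "qprod 1 (Suc n) * qpoch_plus 1 (Suc n)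
      = (qprod 1 n * qpoch_plus 1 n) * ((1 - fps_X ^ Suc n) * (1 + fps_X ^ Suc n) :: 'a fps)"
    by (simp add: qprod_Suc qpoch_plus_def mult_ac)
  also have "(1 - fps_X ^ Suc n) * (1 + fps_X ^ Suc n) = (1 - fps_X ^ (2 * Suc n) :: 'a fps)"
    by (simp add: ring_distribs del: power_Suc flip: power_add mult_2)
  finally show ?case
    by (simp only: Suc qprod_Suc)
qed (simp add: qpoch_plus_def)

fun qbinomial :: "nat \<Rightarrow> nat \<Rightarrow> 'a::comm_ring_1 fps" where
  "qbinomial 0 j = (if j = 0 then 1 else 0)"
| "qbinomial (Suc N) j =
     (if j = 0 then 1 else qbinomial N (j - 1) + fps_X ^ j * qbinomial N j)"

declare qbinomial.simps(2) [simp del]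

lemma qbinomial_0_right [simp]: "qbinomial N 0 = 1"
  by (cases N) (auto simp: qbinomial.simps)

lemma qbinomial_Suc_Suc:
  "qbinomial (Suc N) (Suc i) = qbinomial N i + fps_X ^ Suc i * qbinomial N (Suc i)"
  by (simp add: qbinomial.simps)

lemma qbinomial_eq_0: "N < j \<Longrightarrow> qbinomial N j = 0"
  by (induction N arbitrary: j) (auto simp: qbinomial.simps)

lemma qbinomial_mult_qprod:
  "j \<le> N \<Longrightarrow> qbinomial N j * qprod 1 j * qprod 1 (N - j) = qprod 1 N"
proof (induction N arbitrary: j)
  case (Suc N j)
  consider "j = 0" | "j = Suc N" | i where "j = Suc i" "Suc i \<le> N"
    using Suc.prems by (cases j; cases "j \<le> N") auto
  then show ?case
  proof cases
    case 2
    then show ?thesis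
      using Suc.IH[of N] qbinomial_eq_0[of N "Suc N", where 'a='a]
      by (simp add: qbinomial_Suc_Suc qprod_Suc mult.assoc[symmetric])
  next
    case 3
    define a where "a = N - Suc i"
    have N_minus: "N - i = Suc a" and N_eq: "Suc i + Suc a = Suc N"
      using 3 by (auto simp: a_def)
    have X_power: "fps_X ^ Suc i * fps_X ^ Suc a = (fps_X ^ Suc N :: 'a fps)"
      unfolding N_eq[symmetric] by (rule power_add[symmetric])
    have IH1: "qbinomial N i * qprod 1 i * qprod 1 (Suc a) = (qprod 1 N :: 'a fps)"
      using Suc.IH[of i] 3 N_minus by simp
    have IH2: "qbinomial N (Suc i) * qprod 1 (Suc i) * qprod 1 a = (qprod 1 N :: 'a fps)"
      using Suc.IH[of "Suc i"] 3 a_def by simp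
    have "qbinomial (Suc N) j * qprod 1 j * qprod 1 (Suc N - j)
        = (qbinomial N i * qprod 1 i * qprod 1 (Suc a)) * (1 - fps_X ^ Suc i)
          + fps_X ^ Suc i * (qbinomial N (Suc i) * qprod 1 (Suc i) * qprod 1 a)
            * (1 - fps_X ^ Suc a :: 'a fps)"
      using 3 by (simp add: N_minus qbinomial_Suc_Suc qprod_Suc algebra_simps del: power_Suc)
    also have "\<dots> = qprod 1 N * (1 - fps_X ^ Suc N)"
      unfolding IH1 IH2 by (simp add: algebra_simps del: power_Suc flip: X_power)
    finally show ?thesis
      by (simp add: qprod_Suc)
  qed simp
qed simp

lemma qprod_1_neq_0: "qprod 1 k \<noteq> (0 :: 'a::comm_ring_1 fps)"
  using qprod_nth_0[of 1 k] by (metis fps_zero_nth one_neq_zero le_refl)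

text \<open>Obtained from the closed form by cancelling \<open>(q;q)\<^sub>i\<^sub>+\<^sub>1 (q;q)\<^sub>N\<^sub>-\<^sub>i\<close>.\<close>
lemma qbinomial_Suc_Suc_dual:
  assumes "i \<le> N"
  shows "(qbinomial (Suc N) (Suc i) :: 'a::idom fps)
       = qbinomial N (Suc i) + fps_X ^ (N - i) * qbinomial N i"
proof (cases "i = N")
  case True
  then show ?thesis using qbinomial_eq_0[of N "Suc N", where 'a='a] by (simp add: qbinomial_Suc_Suc)
next
  case False
  define a where "a = N - Suc i"
  have N_minus: "N - i = Suc a" and N_eq: "Suc a + Suc i = Suc N"
    using assms False by (auto simp: a_def)
  have X_power: "fps_X ^ Suc a * fps_X ^ Suc i = (fps_X ^ Suc N :: 'a fps)"
    unfolding N_eq[symmetric] by (rule power_add[symmetric])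
  have closed_i: "qbinomial N i * qprod 1 i * qprod 1 (Suc a) = (qprod 1 N :: 'a fps)"
    using qbinomial_mult_qprod[of i N] assms N_minus by simp
  have closed_Suc_i: "qbinomial N (Suc i) * qprod 1 (Suc i) * qprod 1 a = (qprod 1 N :: 'a fps)"
    using qbinomial_mult_qprod[of "Suc i" N] assms False a_def by simp
  have "(qbinomial N (Suc i) + fps_X ^ (N - i) * qbinomial N i) * (qprod 1 (Suc i) * qprod 1 (N - i))
      = (qbinomial N (Suc i) * qprod 1 (Suc i) * qprod 1 a) * (1 - fps_X ^ Suc a)
        + fps_X ^ Suc a * ((qbinomial N i * qprod 1 i * qprod 1 (Suc a)) * (1 - fps_X ^ Suc i) :: 'a fps)"
    by (simp add: N_minus qprod_Suc algebra_simps del: power_Suc)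
  also have "\<dots> = qprod 1 N * (1 - fps_X ^ Suc N)"
    unfolding closed_i closed_Suc_i by (simp add: algebra_simps del: power_Suc flip: X_power)
  also have "\<dots> = qbinomial (Suc N) (Suc i) * (qprod 1 (Suc i) * qprod 1 (N - i))"
    using qbinomial_mult_qprod[of "Suc i" "Suc N", where 'a='a, symmetric] assms
    by (simp add: qprod_Suc mult.assoc)
  finally show ?thesis
    using qprod_1_neq_0[of _, where 'a='a] by simp
qed

section \<open>A finite triple product\<close>

fun triangular :: "nat \<Rightarrow> nat" where
  "triangular 0 = 0"
| "triangular (Suc k) = triangular k + Suc k"

lemma le_triangular: "k \<le> triangular k"
  by (induction k) auto

lemma strict_mono_triangular: "strict_mono triangular"
  by (rule strict_mono_Suc_iff[THEN iffD2]) simp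

text \<open>The triangular number \<open>T\<^sub>j\<^sub>-\<^sub>m = (j - m)(j - m + 1)/2\<close> of the integer \<open>j - m\<close>;
  for \<open>j < m\<close> it equals \<open>T\<^sub>m\<^sub>-\<^sub>j\<^sub>-\<^sub>1\<close>.\<close>
definition triangular_shift :: "nat \<Rightarrow> nat \<Rightarrow> nat" where
  "triangular_shift m j = (if m \<le> j then triangular (j - m) else triangular (m - j - 1))"

lemma triangular_shift_step:
  "triangular_shift m (Suc i) + m = triangular_shift m i + Suc i"
proof (cases "m \<le> i")
  case True
  then obtain d where "i = m + d" using le_Suc_ex by blast
  then show ?thesis by (simp add: triangular_shift_def)
next
  case False
  then obtain d where "m = Suc (i + d)" using less_imp_Suc_add[of i m] by auto
  then show ?thesis by (cases d) (simp_all add: triangular_shift_def)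
qed

lemma triangular_shift_Suc_Suc: "triangular_shift (Suc m) (Suc i) = triangular_shift m i"
  by (simp add: triangular_shift_def)

lemma triangular_shift_Suc_0: "triangular_shift (Suc m) 0 = m + triangular_shift m 0"
  by (cases m) (auto simp: triangular_shift_def)

definition triple_product_term :: "nat \<Rightarrow> nat \<Rightarrow> nat \<Rightarrow> 'a::comm_ring_1 fps" where
  "triple_product_term n m j = qbinomial (n + m) j * fps_X ^ triangular_shift m j"

definition triple_product_sum :: "nat \<Rightarrow> nat \<Rightarrow> 'a::comm_ring_1 fps" where
  "triple_product_sum n m = (\<Sum>j\<le>n + m. triple_product_term n m j)"

lemma triple_product_term_0 [simp]: "triple_product_term n m 0 = fps_X ^ triangular_shift m 0"
  by (simp add: triple_product_term_def)

lemma triple_product_term_eq_0: "n + m < j \<Longrightarrow> triple_product_term n m j = 0"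
  by (simp add: triple_product_term_def qbinomial_eq_0)

lemma triple_product_sum_shift:
  "triple_product_sum n m
     = triple_product_term n m 0 + (\<Sum>i\<le>n + m. triple_product_term n m (Suc i))"
proof -
  have "triple_product_sum n m = (\<Sum>j\<le>Suc (n + m). triple_product_term n m j)"
    by (simp add: triple_product_sum_def triple_product_term_eq_0)
  also have "\<dots> = triple_product_term n m 0 + (\<Sum>i\<le>n + m. triple_product_term n m (Suc i))"
    by (rule sum.atMost_Suc_shift)
  finally show ?thesis .
qed

lemma triple_product_term_Suc_left:
  assumes "i \<le> n + m"
  shows "(triple_product_term (Suc n) m (Suc i) :: 'a::idom fps)
     = triple_product_term n m (Suc i) + fps_X ^ Suc n * triple_product_term n m i"
proof -
  have "n + m - i + triangular_shift m (Suc i) = Suc n + triangular_shift m i"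
    using triangular_shift_step[of m i] assms by linarith
  hence "fps_X ^ (n + m - i) * fps_X ^ triangular_shift m (Suc i)
      = (fps_X ^ Suc n * fps_X ^ triangular_shift m i :: 'a fps)"
    by (metis power_add)
  with assms show ?thesis
    by (simp add: triple_product_term_def qbinomial_Suc_Suc_dual algebra_simps del: power_Suc)
qed

lemma triple_product_term_Suc_right:
  "(triple_product_term n (Suc m) (Suc i) :: 'a::comm_ring_1 fps)
     = triple_product_term n m i + fps_X ^ m * triple_product_term n m (Suc i)"
proof -
  have "(triple_product_term n (Suc m) (Suc i) :: 'a fps)
      = triple_product_term n m i
        + qbinomial (n + m) (Suc i) * (fps_X ^ Suc i * fps_X ^ triangular_shift m i)"
    by (simp add: triple_product_term_def qbinomial_Suc_Suc triangular_shift_Suc_Suc algebra_simps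
             del: power_Suc)
  also have "fps_X ^ Suc i * fps_X ^ triangular_shift m i
      = (fps_X ^ m * fps_X ^ triangular_shift m (Suc i) :: 'a fps)"
    using triangular_shift_step[of m i] by (metis add.commute add_Suc power_add)
  finally show ?thesis
    by (simp add: triple_product_term_def mult_ac del: power_Suc)
qed

lemma triple_product_sum_Suc_left:
  "(triple_product_sum (Suc n) m :: 'a::idom fps) = (1 + fps_X ^ Suc n) * triple_product_sum n m"
proof -
  have "(triple_product_sum (Suc n) m :: 'a fps)
      = triple_product_term (Suc n) m 0 + (\<Sum>i\<le>n + m. triple_product_term (Suc n) m (Suc i))"
    unfolding triple_product_sum_def add_Suc add_Suc_right by (rule sum.atMost_Suc_shift)
  also have "\<dots> = triple_product_term n m 0 + (\<Sum>i\<le>n + m. triple_product_term n m (Suc i))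
                  + fps_X ^ Suc n * (\<Sum>i\<le>n + m. triple_product_term n m i)"
    by (simp add: triple_product_term_Suc_left sum.distrib sum_distrib_left del: power_Suc)
  also have "\<dots> = (1 + fps_X ^ Suc n) * triple_product_sum n m"
    unfolding triple_product_sum_def[symmetric] triple_product_sum_shift[symmetric]
    by (simp add: algebra_simps)
  finally show ?thesis .
qed

lemma triple_product_sum_Suc_right:
  "(triple_product_sum n (Suc m) :: 'a::comm_ring_1 fps) = (1 + fps_X ^ m) * triple_product_sum n m"
proof -
  have "(triple_product_sum n (Suc m) :: 'a fps)
      = triple_product_term n (Suc m) 0 + (\<Sum>i\<le>n + m. triple_product_term n (Suc m) (Suc i))"
    unfolding triple_product_sum_def add_Suc add_Suc_right by (rule sum.atMost_Suc_shift)
  also have "\<dots> = triple_product_sum n m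
                  + fps_X ^ m * (triple_product_term n m 0 + (\<Sum>i\<le>n + m. triple_product_term n m (Suc i)))"
    by (simp add: triple_product_term_Suc_right sum.distrib sum_distrib_left triangular_shift_Suc_0
                  triple_product_sum_def power_add algebra_simps)
  also have "\<dots> = (1 + fps_X ^ m) * triple_product_sum n m"
    unfolding triple_product_sum_shift[symmetric] by (simp add: algebra_simps)
  finally show ?thesis .
qed

lemma qpoch_plus_Suc: "qpoch_plus a (Suc n) = qpoch_plus a n * (1 + fps_X ^ (a + n))"
  by (simp add: qpoch_plus_def)

theorem finite_triple_product:
  "(\<Sum>j\<le>n + m. qbinomial (n + m) j * fps_X ^ triangular_shift m j :: 'a::idom fps)
     = qpoch_plus 1 n * qpoch_plus 0 m"
proof -
  have "triple_product_sum 0 m = (qpoch_plus 0 m :: 'a fps)"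
    by (induction m) (simp_all add: triple_product_sum_Suc_right qpoch_plus_Suc algebra_simps,
                      simp add: triple_product_sum_def triangular_shift_def qpoch_plus_def)
  then have "triple_product_sum n m = (qpoch_plus 1 n * qpoch_plus 0 m :: 'a fps)"
    by (induction n) (simp_all add: triple_product_sum_Suc_left qpoch_plus_Suc algebra_simps,
                      simp add: qpoch_plus_def)
  then show ?thesis
    by (simp add: triple_product_sum_def triple_product_term_def)
qed

section \<open>Gauss's identity\<close>

text \<open>Modulo \<open>q\<^sup>r\<^sup>+\<^sup>1\<close> with \<open>r = min j (N - j)\<close>, the three products \<open>(q;q)\<^sub>j\<close>, \<open>(q;q)\<^sub>N\<^sub>-\<^sub>j\<close>, \<open>(q;q)\<^sub>N\<close>
  all agree with \<open>(q;q)\<^sub>\<infinity>\<close>, so the closed form of the Gaussian binomial degenerates to \<open>1\<close>.\<close>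
lemma fps_agree_qpoch_inf_mult_qbinomial:
  assumes "j \<le> N"
  shows "fps_agree (min j (N - j) + 1) (qpoch_inf 1 * qbinomial N j) (1 :: 'a::field fps)"
proof -
  let ?r = "min j (N - j) + 1" and ?P = "qpoch_inf 1 :: 'a fps"
  have agree: "fps_agree ?r ?P (qprod 1 k)" if "min j (N - j) \<le> k" for k
    by (rule fps_agree_mono[OF qpoch_inf_agree_qprod]) (use that in simp_all)
  have "fps_agree ?r (qbinomial N j * ?P * ?P) (qbinomial N j * qprod 1 j * qprod 1 (N - j))"
    by (intro fps_agree_mult agree fps_agree_refl) simp_all
  also have "qbinomial N j * qprod 1 j * qprod 1 (N - j) = (qprod 1 N :: 'a fps)"
    by (rule qbinomial_mult_qprod[OF assms])
  also have "fps_agree ?r \<dots> ?P"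
    by (rule fps_agree_sym, rule agree) (use assms in simp)
  finally have "fps_agree ?r (?P * (?P * qbinomial N j)) (?P * 1)"
    by (simp only: mult_ac mult_1_left mult_1_right)
  thus ?thesis
    by (rule fps_agree_mult_cancel) (simp add: qpoch_inf_nth_0)
qed

lemma le_min_add_triangular_shift:
  "j \<le> n + Suc n \<Longrightarrow> n \<le> min j (n + Suc n - j) + triangular_shift (Suc n) j"
  using le_triangular[of "j - Suc n"] le_triangular[of "n - j"]
  by (auto simp: triangular_shift_def)

lemma fps_agree_qpoch_inf_mult_triple_product:
  "fps_agree (n + 1) (qpoch_inf 1 * triple_product_sum n (Suc n))
     (\<Sum>j\<le>n + Suc n. fps_X ^ triangular_shift (Suc n) j :: 'a::field fps)"
proof -
  have "(qpoch_inf 1 * triple_product_sum n (Suc n) :: 'a fps)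
      = (\<Sum>j\<le>n + Suc n. (qpoch_inf 1 * qbinomial (n + Suc n) j) * fps_X ^ triangular_shift (Suc n) j)"
    unfolding triple_product_sum_def triple_product_term_def sum_distrib_left
    by (simp only: mult.assoc)
  also have "fps_agree (n + 1) \<dots> (\<Sum>j\<le>n + Suc n. 1 * fps_X ^ triangular_shift (Suc n) j)"
  proof (rule fps_agree_sum)
    fix j assume "j \<in> {..n + Suc n}"
    hence j: "j \<le> n + Suc n" by simp
    show "fps_agree (n + 1) ((qpoch_inf 1 * qbinomial (n + Suc n) j) * fps_X ^ triangular_shift (Suc n) j)
        (1 * fps_X ^ triangular_shift (Suc n) j :: 'a fps)"
      by (rule fps_agree_mono[OF fps_agree_mult_X_power[OF fps_agree_qpoch_inf_mult_qbinomial[OF j]]])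
         (use le_min_add_triangular_shift[OF j] in simp)
  qed
  finally show ?thesis by (simp only: mult_1_left)
qed

lemma sum_X_power_triangular_shift:
  "(\<Sum>j\<le>n + Suc n. fps_X ^ triangular_shift (Suc n) j :: 'a::comm_ring_1 fps)
     = 2 * (\<Sum>k\<le>n. fps_X ^ triangular k)"
proof -
  let ?g = "\<lambda>j. fps_X ^ triangular_shift (Suc n) j :: 'a fps"
  have "(\<Sum>j\<le>n + Suc n. ?g j) = sum ?g {0..n} + sum ?g {n + 1..n + Suc n}"
    unfolding atMost_atLeast0 by (rule sum.ub_add_nat) simp
  also have "sum ?g {0..n} = (\<Sum>k=0..n. ?g (n + 0 - k))"
    by (rule sum.atLeastAtMost_rev)
  also have "\<dots> = (\<Sum>k\<le>n. fps_X ^ triangular k)"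
    unfolding atMost_atLeast0 by (rule sum.cong) (auto simp: triangular_shift_def)
  also have "sum ?g {n + 1..n + Suc n} = (\<Sum>k=0..n. ?g (k + Suc n))"
    using sum.shift_bounds_cl_nat_ivl[of ?g 0 "Suc n" n] by (simp only: add_0 Suc_eq_plus1)
  also have "\<dots> = (\<Sum>k\<le>n. fps_X ^ triangular k)"
    unfolding atMost_atLeast0 by (rule sum.cong) (auto simp: triangular_shift_def)
  finally show ?thesis by (simp only: mult_2)
qed

definition triangular_series :: "'a::zero_neq_one fps" where
  "triangular_series = Abs_fps (\<lambda>i. if i \<in> range triangular then 1 else 0)"

lemma fps_agree_triangular_series:
  "fps_agree (n + 1) (\<Sum>k\<le>n. fps_X ^ triangular k) (triangular_series :: 'a::comm_ring_1 fps)"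
  unfolding fps_agree_def
proof (intro allI impI)
  fix i assume i: "i < n + 1"
  have "(\<Sum>k\<le>n. fps_X ^ triangular k :: 'a fps) $ i = (\<Sum>k\<le>n. if i = triangular k then 1 else 0)"
    by (simp add: fps_sum_nth)
  also have "\<dots> = (if i \<in> range triangular then 1 else 0)"
  proof (cases "i \<in> range triangular")
    case True
    then obtain k0 where k0: "i = triangular k0" by blast
    with i le_triangular[of k0] have "k0 \<le> n" by simp
    have "(\<Sum>k\<le>n. if i = triangular k then 1 else 0 :: 'a) = (\<Sum>k\<le>n. if k = k0 then 1 else 0)"
      using strict_mono_eq[OF strict_mono_triangular] k0 by (intro sum.cong) auto
    with True \<open>k0 \<le> n\<close> show ?thesis by simp
  qed (auto intro!: sum.neutral)
  finally show "(\<Sum>k\<le>n. fps_X ^ triangular k) $ i = (triangular_series :: 'a fps) $ i"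
    by (simp add: triangular_series_def)
qed

text \<open>Multiply the finite triple product for \<open>m = n + 1\<close> by \<open>(q;q)\<^sub>\<infinity>\<close>: up to degree \<open>n\<close> each
  Gaussian binomial becomes \<open>1\<close>, and the exponents \<open>T\<^sub>j\<^sub>-\<^sub>n\<^sub>-\<^sub>1\<close> run twice through \<open>T\<^sub>0, \<dots>, T\<^sub>n\<close>.\<close>
lemma fps_agree_qpoch_inf_mult_qpoch_plus_square:
  "fps_agree (n + 1) (qpoch_inf 1 * qpoch_plus 1 n ^ 2) (triangular_series :: 'a::field_char_0 fps)"
proof -
  have "triple_product_sum n (Suc n) = (qpoch_plus 1 n * qpoch_plus 0 (Suc n) :: 'a fps)"
    unfolding triple_product_sum_def triple_product_term_def by (rule finite_triple_product)
  hence prod_eq: "qpoch_inf 1 * triple_product_sum n (Suc n)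
      = (2 * (qpoch_inf 1 * qpoch_plus 1 n ^ 2) :: 'a fps)"
    by (simp only: qpoch_plus_0_Suc power2_eq_square mult_ac)
  have "fps_agree (n + 1) (2 * (qpoch_inf 1 * qpoch_plus 1 n ^ 2))
           (2 * (\<Sum>k\<le>n. fps_X ^ triangular k) :: 'a fps)"
    using fps_agree_qpoch_inf_mult_triple_product[of n, where 'a='a]
    unfolding prod_eq sum_X_power_triangular_shift .
  also have "fps_agree (n + 1) \<dots> (2 * triangular_series)"
    by (rule fps_agree_mult[OF fps_agree_refl fps_agree_triangular_series])
  finally show ?thesis
    by (rule fps_agree_mult_cancel) (simp add: numeral_fps_const)
qed

theorem gauss_identity:
  "(qpoch_inf 2 ^ 2 :: 'a::field_char_0 fps) = qpoch_inf 1 * triangular_series"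
proof (rule fps_eq_if_agree)
  fix n
  let ?P = "qpoch_inf 1 :: 'a fps" and ?D = "qpoch_plus 1 n :: 'a fps"
  have "fps_agree (n + 1) (qpoch_inf 2) (qprod 2 n :: 'a fps)"
    by (rule qpoch_inf_agree_qprod) simp
  also have "qprod 2 n = qprod 1 n * (?D :: 'a fps)"
    by (rule qprod_1_mult_qpoch_plus_1[symmetric])
  also have "fps_agree (n + 1) \<dots> (?P * ?D)"
    by (intro fps_agree_mult fps_agree_sym[OF qpoch_inf_agree_qprod] fps_agree_refl) simp
  finally have "fps_agree (n + 1) (qpoch_inf 2 ^ 2) ((?P * ?D) ^ 2)"
    unfolding power2_eq_square by (intro fps_agree_mult)
  also have "(?P * ?D) ^ 2 = ?P * (?P * ?D ^ 2)"
    by (simp add: power2_eq_square mult_ac)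
  also have "fps_agree (n + 1) \<dots> (?P * triangular_series)"
    by (intro fps_agree_mult fps_agree_refl fps_agree_qpoch_inf_mult_qpoch_plus_square)
  finally show "fps_agree n (qpoch_inf 2 ^ 2) (?P * triangular_series)"
    by (rule fps_agree_mono) simp
qed

section \<open>Maximal number of distinct parts\<close>

lemma triangular_card_le_sum:
  assumes "finite A" "0 \<notin> A"
  shows "triangular (card A) \<le> \<Sum>A"
  using assms
proof (induction "card A" arbitrary: A)
  case (Suc c A)
  define m where "m = Max A"
  have "A \<noteq> {}" using Suc.hyps(2) by auto
  hence "m \<in> A" using Max_in[OF Suc.prems(1)] by (simp add: m_def)
  have "A \<subseteq> {1..m}"
    using Suc.prems Max_ge[OF Suc.prems(1)] by (auto simp: m_def Suc_le_eq intro: gr0I)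
  hence "card A \<le> m" using card_mono[of "{1..m}" A] by simp
  have "c = card (A - {m})" using Suc.hyps(2) \<open>m \<in> A\<close> Suc.prems(1) by simp
  hence "triangular c \<le> \<Sum>(A - {m})" using Suc.hyps(1) Suc.prems by simp
  moreover have "\<Sum>A = m + \<Sum>(A - {m})" using sum.remove[OF Suc.prems(1) \<open>m \<in> A\<close>] by simp
  ultimately show ?case using \<open>card A \<le> m\<close> Suc.hyps(2)[symmetric] by simp
qed simp

lemma sum_set_mset_le_sum_mset: "\<Sum>(set_mset M) \<le> sum_mset (M :: nat multiset)"
proof -
  obtain B where "M = mset_set (set_mset M) + B"
    using mset_set_set_mset_msubset by (metis subset_mset.le_iff_add)
  moreover have "\<Sum>(set_mset M) = sum_mset (mset_set (set_mset M))"
    using sum_unfold_sum_mset[of "\<lambda>x. x" "set_mset M"] by simp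
  ultimately show ?thesis by (metis le_add1 sum_mset.union)
qed

lemma triangular_alpha1_le:
  assumes "M \<in> partitions n"
  shows "triangular (alpha1 M) \<le> n"
proof -
  have "triangular (alpha1 M) \<le> \<Sum>(set_mset M)"
    unfolding alpha1_def using assms by (intro triangular_card_le_sum) (auto simp: partitions_def)
  also have "\<dots> \<le> n"
    using sum_set_mset_le_sum_mset[of M] assms by (simp add: partitions_def)
  finally show ?thesis .
qed

lemma sum_atLeast1_atMost_eq_triangular: "\<Sum>{1..k} = triangular k"
  by (induction k) (simp_all add: sum.nat_ivl_Suc')

text \<open>The parts \<open>1, \<dots>, k - 1\<close> together with \<open>n - T\<^sub>k\<^sub>-\<^sub>1 \<ge> k\<close>.\<close>
lemma alpha1_partitions_witness:
  assumes "triangular k \<le> n" "0 < k"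
  shows "k \<in> alpha1 ` partitions n"
proof -
  obtain k' where Suc: "k = Suc k'" using assms(2) gr0_implies_Suc by blast
  define W where "W = mset_set {1..k'} + {# n - triangular k' #}"
  have big: "Suc k' \<le> n - triangular k'" using assms Suc by simp
  have set_W: "set_mset W = insert (n - triangular k') {1..k'}" by (simp add: W_def)
  have "sum_mset W = \<Sum>{1..k'} + (n - triangular k')"
    using sum_unfold_sum_mset[of "\<lambda>x. x" "{1..k'}"] by (simp add: W_def)
  also have "\<dots> = n" using sum_atLeast1_atMost_eq_triangular[of k'] assms Suc by simp
  finally have "W \<in> partitions n" using set_W big by (auto simp: partitions_def)
  moreover have "alpha1 W = k" using set_W big Suc by (simp add: alpha1_def)
  ultimately show ?thesis by force
qed

lemma partitions_0: "partitions 0 = {{#}}"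
proof -
  have "M = {#}" if "\<forall>x\<in>#M. 0 < x" "sum_mset M = 0" for M :: "nat multiset"
    using that by (metis all_not_in_conv less_numeral_extra(3) set_mset_eq_empty_iff sum_mset_0_iff)
  then show ?thesis by (auto simp: partitions_def)
qed

lemma b_seq_eq:
  assumes "triangular k \<le> n" "n < triangular (Suc k)"
  shows "b_seq n = k"
proof -
  have le_k: "y \<le> k" if "y \<in> alpha1 ` partitions n" for y
  proof -
    from that obtain M where "M \<in> partitions n" "y = alpha1 M" by blast
    with triangular_alpha1_le assms(2) have "triangular y < triangular (Suc k)"
      by (metis le_less_trans)
    thus ?thesis
      by (metis less_Suc_eq_le strict_mono_less strict_mono_triangular)
  qed
  have "k \<in> alpha1 ` partitions n"
  proof (cases k)
    case 0
    with assms(2) show ?thesis by (simp add: partitions_0 alpha1_def)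
  qed (use alpha1_partitions_witness[OF assms(1)] in simp)
  moreover have "finite (alpha1 ` partitions n)"
    by (rule finite_subset[of _ "{..k}"]) (use le_k in auto)
  ultimately show ?thesis
    unfolding b_seq_def using le_k by (intro Max_eqI)
qed

lemma ex_triangular_le_less_triangular_Suc: "\<exists>k. triangular k \<le> n \<and> n < triangular (Suc k)"
proof (induction n)
  case (Suc n)
  then obtain k where "triangular k \<le> n" "n < triangular (Suc k)" by blast
  then show ?case
    by (cases "Suc n = triangular (Suc k)") (auto intro: exI[of _ "Suc k"] exI[of _ k])
qed (auto intro: exI[of _ 0])

lemma b_seq_Suc:
  "b_seq (Suc i) = b_seq i + (if Suc i \<in> range triangular then 1 else 0)"
proof -
  obtain k where k: "triangular k \<le> i" "i < triangular (Suc k)"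
    using ex_triangular_le_less_triangular_Suc by blast
  show ?thesis
  proof (cases "Suc i = triangular (Suc k)")
    case True
    then have "Suc i \<in> range triangular" by (metis rangeI)
    with True show ?thesis using b_seq_eq[OF k] b_seq_eq[of "Suc k" "Suc i"] by simp
  next
    case False
    have "Suc i \<notin> range triangular"
    proof
      assume "Suc i \<in> range triangular"
      then obtain l where "Suc i = triangular l" by blast
      with k False have "triangular k < triangular l" "triangular l < triangular (Suc k)" by auto
      then show False
        by (metis not_less_eq strict_mono_less strict_mono_triangular)
    qed
    with False k show ?thesis using b_seq_eq[OF k] b_seq_eq[of k "Suc i"] by simp
  qed
qed

lemma b_seq_0: "b_seq 0 = 0"
  by (rule b_seq_eq) simp_all

lemma one_minus_X_mult_b_seq:
  "(1 - fps_X) * Abs_fps (\<lambda>n. of_nat (b_seq n)) = (triangular_series - 1 :: 'a::comm_ring_1 fps)"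
proof (rule fps_ext)
  fix n
  show "((1 - fps_X) * Abs_fps (\<lambda>n. of_nat (b_seq n))) $ n = (triangular_series - 1 :: 'a fps) $ n"
  proof (cases n)
    case 0
    have "0 \<in> range triangular" by (metis rangeI triangular.simps(1))
    with 0 show ?thesis by (simp add: b_seq_0 triangular_series_def)
  qed (simp add: algebra_simps b_seq_Suc triangular_series_def)
qed

theorem mainTheorem2:
  shows "(Abs_fps (\<lambda>n. of_nat (b_seq n)) :: rat fps)
    = inverse (1 - fps_X) * ((qpoch_inf 2) ^ 2 * inverse (qpoch_inf 1) - 1)"
proof -
  let ?P = "qpoch_inf 1 :: rat fps"
  have "(qpoch_inf 2) ^ 2 * inverse ?P = triangular_series * (?P * inverse ?P)"
    by (simp only: gauss_identity mult_ac)
  also have "?P * inverse ?P = 1"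
    by (rule inverse_mult_eq_1') (simp add: qpoch_inf_nth_0)
  finally have "(qpoch_inf 2) ^ 2 * inverse ?P - 1 = (1 - fps_X) * Abs_fps (\<lambda>n. of_nat (b_seq n))"
    by (simp add: one_minus_X_mult_b_seq)
  then show ?thesis
    by (simp add: mult.assoc[symmetric] inverse_mult_eq_1)
qed

end
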